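(* Assume the discrete inf-sup condition: there is $\kappa>0$ such that $$\kappa\|w\|_W\le\sup_{v_\eta\in V_\eta,\ v_\eta\neq0}\frac{\mathcal{A}(w,v_\eta)}{\|v_\eta\|_V}\quad\text{for all } w\in W_\theta\cup S_\theta.$$ Let $(w^n_\theta)\subset W_\theta$ be a minimizing sequence, i.e. $\lim_n\|u-w^n_\theta\|_{op,\eta}=\inf_{w_\theta\in W_\theta}\|u-w_\theta\|_{op,\eta}$. Then $(w^n_\theta)$ has a subsequence converging weakly in $W$ to some $u^*_\theta\in\mathrm{cl}^{seq}_w(W_\theta)$, and every such weak limit satisfies $\|u-u^*_\theta\|_{op,\eta}\le\|u-w_\theta\|_{op,\eta}$ for all $w_\theta\in W_\theta$.
   Context: $W$ and $V$ are reflexive separable real Banach spaces. $\mathcal{A}:W\times V\to\mathbb{R}$ is a bilinear form with $\mathcal{A}(w,v)\le M\|w\|_W\|v\|_V$, $\mathcal{F}:V\to\mathbb{R}$ is bounded linear, and $u\in W$ is the unique solution of $\mathcal{A}(u,v)=\mathcal{F}(v)$ for all $v\in V$. $W_\theta\subseteq W$ and $V_\eta\subseteq V$ are arbitrary subsets, $V_\eta$ containing an element of nonzero norm. For $w\in W$, $\|w\|_{op,\eta}:=\sup_{v_\eta\in V_\eta,\ \|v_\eta\|_V\neq0}\mathcal{A}(w,v_\eta)/\|v_\eta\|_V$. $S_\theta:=\{w_1-w_2:\ w_1,w_2\in W_\theta\}$. $\mathrm{cl}^{seq}_w(W_\theta)$ is the set of all weak limits in $W$ of sequences in $W_\theta$.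 *)

theory Defs
  imports "HOL-Analysis.Analysis"
begin

definition reflexive_space :: "('a::real_normed_vector) itself \<Rightarrow> bool" where
  "reflexive_space _ \<longleftrightarrow>
     (\<forall>\<Phi> :: ('a \<Rightarrow>\<^sub>L real) \<Rightarrow>\<^sub>L real. \<exists>x::'a. \<forall>f. blinfun_apply \<Phi> f = blinfun_apply f x)"

definition separable_space :: "('a::real_normed_vector) itself \<Rightarrow> bool" where
  "separable_space _ \<longleftrightarrow> (\<exists>D::'a set. countable D \<and> closure D = UNIV)"

definition weak_conv :: "(nat \<Rightarrow> 'a::real_normed_vector) \<Rightarrow> 'a \<Rightarrow> bool" where
  "weak_conv xs x \<longleftrightarrow>
     (\<forall>f :: 'a \<Rightarrow> real. bounded_linear f \<longrightarrow> (\<lambda>n. f (xs n)) \<longlonglongrightarrow> f x)"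

definition seq_weak_closure :: "'a::real_normed_vector set \<Rightarrow> 'a set" where
  "seq_weak_closure S = {x. \<exists>xs. (\<forall>n. xs n \<in> S) \<and> weak_conv xs x}"

definition op_norm :: "('w \<Rightarrow> 'v::real_normed_vector \<Rightarrow> real) \<Rightarrow> 'v set \<Rightarrow> 'w \<Rightarrow> real" where
  "op_norm A V\<^sub>\<eta> w = (SUP v \<in> {v \<in> V\<^sub>\<eta>. norm v \<noteq> 0}. A w v / norm v)"

definition diff_set :: "'a::ab_group_add set \<Rightarrow> 'a set" where
  "diff_set S = {w1 - w2 | w1 w2. w1 \<in> S \<and> w2 \<in> S}"

end

theory Submission
  imports Defs "HOL-Library.Diagonal_Subsequence"
begin

text \<open>
  Since the discrete dual norm is subadditive, the inf-sup condition on differences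
  \<open>w\<^sub>0 - w\<^sub>n = (u - w\<^sub>n) - (u - w\<^sub>0)\<close> turns the bounded residuals of a minimizing sequence into a
  bound on the sequence itself. In a reflexive separable space bounded sequences have weakly
  convergent subsequences: a diagonal argument gives convergence against norming functionals of a
  dense sequence, their span is dense in the dual by Hahn--Banach and reflexivity, and the limit
  functional on the dual is evaluation at a point. Finally the discrete dual norm is a supremum of
  weakly continuous functionals, hence weakly lower semicontinuous, so every weak limit does at
  least as well as every element of \<open>W\<^sub>\<theta>\<close>.
\<close>

section \<open>Hahn--Banach\<close>

definition sublinear :: "('a::real_vector \<Rightarrow> real) \<Rightarrow> bool" where
  "sublinear p \<longleftrightarrow> (\<forall>x y. p (x + y) \<le> p x + p y) \<and> (\<forall>c x. c \<ge> 0 \<longrightarrow> p (c *\<^sub>R x) = c * p x)"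

lemma sublinearD:
  assumes "sublinear p"
  shows sublinear_add: "p (x + y) \<le> p x + p y"
    and sublinear_scaleR: "c \<ge> 0 \<Longrightarrow> p (c *\<^sub>R x) = c * p x"
  using assms unfolding sublinear_def by blast+

lemma sublinear_zero: "sublinear p \<Longrightarrow> p 0 = 0"
  using sublinear_scaleR[of p 0 0] by simp

text \<open>The graph of a linear functional on a subspace, dominated by \<open>p\<close>; extensions of
  functionals are then simply supersets of graphs.\<close>
definition dominated_graph :: "('a::real_vector \<Rightarrow> real) \<Rightarrow> ('a \<times> real) set \<Rightarrow> bool" where
  "dominated_graph p G \<longleftrightarrow>
     subspace G \<and> (\<forall>b. (0, b) \<in> G \<longrightarrow> b = 0) \<and> (\<forall>x b. (x, b) \<in> G \<longrightarrow> b \<le> p x)"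

lemma dominated_graph_unique:
  assumes G: "dominated_graph p G" and "(x, b) \<in> G" "(x, b') \<in> G"
  shows "b = b'"
proof -
  have "(x, b) - (x, b') \<in> G"
    using G assms(2,3) unfolding dominated_graph_def by (blast intro: subspace_diff)
  then show ?thesis using G unfolding dominated_graph_def by (metis diff_Pair diff_self eq_iff_diff_eq_0)
qed

lemma dominated_graph_Union_chain:
  assumes "C \<noteq> {}" and dom: "\<And>G. G \<in> C \<Longrightarrow> dominated_graph p G" and "chain\<^sub>\<subseteq> C"
  shows "dominated_graph p (\<Union>C)"
proof -
  have ch: "\<And>G H. G \<in> C \<Longrightarrow> H \<in> C \<Longrightarrow> G \<subseteq> H \<or> H \<subseteq> G"
    using \<open>chain\<^sub>\<subseteq> C\<close> unfolding chain_subset_def by blast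
  have "subspace (\<Union>C)"
    unfolding subspace_def
  proof (intro conjI ballI allI)
    show "0 \<in> \<Union>C" using \<open>C \<noteq> {}\<close> dom unfolding dominated_graph_def by (blast intro: subspace_0)
  next
    fix x y assume "x \<in> \<Union>C" "y \<in> \<Union>C"
    then obtain G H where "G \<in> C" "H \<in> C" "x \<in> G" "y \<in> H" by blast
    with ch[of G H] dom show "x + y \<in> \<Union>C"
      unfolding dominated_graph_def by (metis UnionI in_mono subspace_add)
  next
    fix c x assume "x \<in> \<Union>C"
    with dom show "c *\<^sub>R x \<in> \<Union>C" unfolding dominated_graph_def by (blast intro: subspace_scale)
  qed
  with dom show ?thesis unfolding dominated_graph_def by blast
qed

lemma dominated_graph_extension_value:
  assumes p: "sublinear p" and G: "dominated_graph p G"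
  shows "\<exists>c. \<forall>x b. (x, b) \<in> G \<longrightarrow> b - p (x - y) \<le> c \<and> c \<le> p (x + y) - b"
proof -
  have G0: "(0, 0) \<in> G" using G unfolding dominated_graph_def by (metis subspace_0 zero_prod_def)
  \<comment> \<open>every lower value is below every upper one, by domination at \<open>x1 + x2\<close>\<close>
  have sep: "b1 - p (x1 - y) \<le> p (x2 + y) - b2" if "(x1, b1) \<in> G" "(x2, b2) \<in> G" for x1 b1 x2 b2
  proof -
    have "(x1 + x2, b1 + b2) \<in> G"
      using G that unfolding dominated_graph_def by (metis add_Pair subspace_add)
    then have "b1 + b2 \<le> p (x1 + x2)" using G unfolding dominated_graph_def by blast
    also have "\<dots> \<le> p (x1 - y) + p (x2 + y)" using sublinear_add[OF p, of "x1 - y" "x2 + y"] by simp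
    finally show ?thesis by simp
  qed
  define L where "L = {b - p (x - y) | x b. (x, b) \<in> G}"
  have "L \<noteq> {}" using G0 unfolding L_def by blast
  moreover have "bdd_above L" using sep[OF _ G0] unfolding L_def by (intro bdd_aboveI) auto
  ultimately have "b - p (x - y) \<le> Sup L \<and> Sup L \<le> p (x + y) - b" if "(x, b) \<in> G" for x b
    using that sep unfolding L_def by (auto intro!: cSup_upper cSup_least)
  then show ?thesis by blast
qed

text \<open>Extending along \<open>y\<close> with value \<open>c\<close> stays dominated: for \<open>t \<noteq> 0\<close> rescale \<open>(x, b)\<close> by
  \<open>1 / \<bar>t\<bar>\<close> and use the lower or upper bound on \<open>c\<close>.\<close>
lemma dominated_graph_extension_dominated:
  assumes p: "sublinear p" and G: "dominated_graph p G"
    and c: "\<And>x b. (x, b) \<in> G \<Longrightarrow> b - p (x - y) \<le> c \<and> c \<le> p (x + y) - b"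
    and xb: "(x, b) \<in> G"
  shows "b + t * c \<le> p (x + t *\<^sub>R y)"
proof -
  have scaled: "(s *\<^sub>R x, s * b) \<in> G" for s
    using G xb subspace_scale[of G "(x, b)" s] unfolding dominated_graph_def by simp
  show ?thesis
  proof (cases t "0::real" rule: linorder_cases)
    case less
    define s where "s = - t"
    have s: "s > 0" using less by (simp add: s_def)
    have "inverse s * b - p (inverse s *\<^sub>R x - y) \<le> c" using c[OF scaled] by blast
    then have "s * (inverse s * b - p (inverse s *\<^sub>R x - y)) \<le> s * c"
      using s by (intro mult_left_mono) auto
    moreover have "s * p (inverse s *\<^sub>R x - y) = p (x + t *\<^sub>R y)"
      using s sublinear_scaleR[OF p, of s "inverse s *\<^sub>R x - y"]
      by (simp add: scaleR_diff_right s_def)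
    moreover have "s * (inverse s * b) = b" using s by simp
    ultimately have "b - p (x + t *\<^sub>R y) \<le> s * c" by (simp only: right_diff_distrib)
    then show ?thesis by (simp add: s_def)
  next
    case equal
    then show ?thesis using G xb unfolding dominated_graph_def by simp
  next
    case greater
    have "c \<le> p (inverse t *\<^sub>R x + y) - inverse t * b" using c[OF scaled] by blast
    then have "t * c \<le> t * (p (inverse t *\<^sub>R x + y) - inverse t * b)"
      using greater by (intro mult_left_mono) auto
    moreover have "t * p (inverse t *\<^sub>R x + y) = p (x + t *\<^sub>R y)"
      using greater sublinear_scaleR[OF p, of t "inverse t *\<^sub>R x + y"]
      by (simp add: scaleR_add_right)
    moreover have "t * (inverse t * b) = b" using greater by simp
    ultimately show ?thesis by (simp add: right_diff_distrib)
  qed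
qed

lemma dominated_graph_extend:
  assumes p: "sublinear p" and G: "dominated_graph p G" and y: "\<nexists>b. (y, b) \<in> G"
  shows "\<exists>G'. dominated_graph p G' \<and> G \<subseteq> G' \<and> (\<exists>b. (y, b) \<in> G')"
proof -
  obtain c where c: "\<And>x b. (x, b) \<in> G \<Longrightarrow> b - p (x - y) \<le> c \<and> c \<le> p (x + y) - b"
    using dominated_graph_extension_value[OF p G] by blast
  have subG: "subspace G" and graphG: "\<And>b. (0, b) \<in> G \<Longrightarrow> b = 0"
    using G unfolding dominated_graph_def by blast+
  have scaled: "(s *\<^sub>R x, s * b) \<in> G" if "(x, b) \<in> G" for s x b
    using subspace_scale[OF subG that, of s] by simp
  define G' where "G' = {g + z | g z. g \<in> G \<and> z \<in> span {(y, c)}}"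
  have G'_iff: "w \<in> G' \<longleftrightarrow> (\<exists>x b t. (x, b) \<in> G \<and> w = (x + t *\<^sub>R y, b + t * c))" for w
    unfolding G'_def span_singleton by force
  have "dominated_graph p G'"
    unfolding dominated_graph_def
  proof (intro conjI allI impI)
    show "subspace G'" unfolding G'_def by (intro subspace_sums subG subspace_span)
  next
    fix b' assume "(0, b') \<in> G'"
    then obtain x b t where xb: "(x, b) \<in> G" and "x + t *\<^sub>R y = 0" and b': "b' = b + t * c"
      unfolding G'_iff by auto
    then have x: "x = - (t *\<^sub>R y)" by (simp only: eq_neg_iff_add_eq_0)
    show "b' = 0"
    proof (cases "t = 0")
      case True
      then show ?thesis using graphG xb x b' by simp
    next
      case False
      then have "(y, - inverse t * b) \<in> G" using scaled[OF xb, of "- inverse t"] x by simp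
      then show ?thesis using y by blast
    qed
  next
    fix z b' assume "(z, b') \<in> G'"
    then show "b' \<le> p z"
      unfolding G'_iff using dominated_graph_extension_dominated[OF p G c] by auto
  qed
  moreover have "G \<subseteq> G'"
  proof
    fix w assume "w \<in> G"
    then show "w \<in> G'" unfolding G'_iff by (intro exI[of _ "fst w"] exI[of _ "snd w"] exI[of _ 0]) simp
  qed
  moreover have "(y, c) \<in> G'" unfolding G'_iff using subspace_0[OF subG]
    by (intro exI[of _ 0] exI[of _ 1]) (simp add: zero_prod_def)
  ultimately show ?thesis by blast
qed

lemma dominated_graph_maximal_exists:
  assumes G0: "dominated_graph p G0"
  obtains M where "dominated_graph p M" "G0 \<subseteq> M" "\<And>G. dominated_graph p G \<Longrightarrow> M \<subseteq> G \<Longrightarrow> G = M"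
proof -
  define \<G> where "\<G> = {G. dominated_graph p G \<and> G0 \<subseteq> G}"
  have "\<forall>C\<in>chains \<G>. \<exists>U\<in>\<G>. \<forall>G\<in>C. G \<subseteq> U"
  proof
    fix C assume C: "C \<in> chains \<G>"
    show "\<exists>U\<in>\<G>. \<forall>G\<in>C. G \<subseteq> U"
    proof (cases "C = {}")
      case True
      then show ?thesis using G0 unfolding \<G>_def by blast
    next
      case False
      from C have "C \<subseteq> \<G>" "chain\<^sub>\<subseteq> C" by (simp_all add: chains_def)
      then have "dominated_graph p (\<Union>C)" "G0 \<subseteq> \<Union>C"
        using dominated_graph_Union_chain[OF False] False unfolding \<G>_def by blast+
      then show ?thesis unfolding \<G>_def by blast
    qed
  qed
  from Zorn_Lemma2[OF this] obtain M where M: "M \<in> \<G>" and max: "\<forall>G\<in>\<G>. M \<subseteq> G \<longrightarrow> G = M"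
    by blast
  show thesis
  proof (rule that)
    show "dominated_graph p M" "G0 \<subseteq> M" using M unfolding \<G>_def by blast+
    fix G assume "dominated_graph p G" "M \<subseteq> G"
    then show "G = M" using max M unfolding \<G>_def by blast
  qed
qed

theorem hahn_banach:
  fixes p :: "'a::real_vector \<Rightarrow> real"
  assumes p: "sublinear p" and G0: "dominated_graph p G0"
  shows "\<exists>g. linear g \<and> (\<forall>x b. (x, b) \<in> G0 \<longrightarrow> g x = b) \<and> (\<forall>x. g x \<le> p x)"
proof -
  obtain M where M_graph: "dominated_graph p M" and G0_M: "G0 \<subseteq> M"
    and maximal: "\<And>G. dominated_graph p G \<Longrightarrow> M \<subseteq> G \<Longrightarrow> G = M"
    using dominated_graph_maximal_exists[OF G0] by metis
  have total: "\<exists>b. (x, b) \<in> M" for x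
  proof (rule ccontr)
    assume "\<nexists>b. (x, b) \<in> M"
    then obtain G b where G: "dominated_graph p G" "M \<subseteq> G" "(x, b) \<in> G"
      using dominated_graph_extend[OF p M_graph] by blast
    with maximal[OF G(1,2)] \<open>\<nexists>b. (x, b) \<in> M\<close> show False by simp
  qed
  define g where "g x = (THE b. (x, b) \<in> M)" for x
  have M_iff: "(x, b) \<in> M \<longleftrightarrow> g x = b" for x b
  proof -
    obtain b0 where b0: "(x, b0) \<in> M" using total by blast
    have unique: "\<And>b. (x, b) \<in> M \<Longrightarrow> b = b0" using dominated_graph_unique[OF M_graph _ b0] .
    then have "g x = b0" unfolding g_def using b0 by (rule the_equality[rotated])
    then show ?thesis using b0 unique by blast
  qed
  have subM: "subspace M" using M_graph unfolding dominated_graph_def by blast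
  have "linear g"
  proof (rule linearI)
    fix x y
    show "g (x + y) = g x + g y"
      using subspace_add[OF subM, of "(x, g x)" "(y, g y)"] M_iff by simp
  next
    fix c x
    show "g (c *\<^sub>R x) = c *\<^sub>R g x"
      using subspace_scale[OF subM, of "(x, g x)" c] M_iff by simp
  qed
  moreover have "g x \<le> p x" for x
    using M_graph M_iff[of x "g x"] unfolding dominated_graph_def by blast
  ultimately show ?thesis using G0_M M_iff by blast
qed

corollary hahn_banach_line:
  fixes p :: "'a::real_vector \<Rightarrow> real"
  assumes p: "sublinear p" and dom: "\<And>t. t * a \<le> p (t *\<^sub>R v)"
  shows "\<exists>g. linear g \<and> g v = a \<and> (\<forall>x. g x \<le> p x)"
proof -
  have line: "(x, b) \<in> span {(v, a)} \<longleftrightarrow> (\<exists>t. x = t *\<^sub>R v \<and> b = t * a)" for x b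
    unfolding span_singleton by auto
  have "dominated_graph p (span {(v, a)})"
    unfolding dominated_graph_def
  proof (intro conjI allI impI)
    fix b assume "(0, b) \<in> span {(v, a)}"
    then obtain t where "t *\<^sub>R v = 0" "b = t * a" unfolding line by auto
    moreover have "(- t) *\<^sub>R v = 0" using \<open>t *\<^sub>R v = 0\<close> by simp
    ultimately have "t * a \<le> 0" "- t * a \<le> 0"
      using dom[of t] dom[of "- t"] sublinear_zero[OF p] by (metis, metis)
    with \<open>b = t * a\<close> show "b = 0" by simp
  next
    show "subspace (span {(v, a)})" by (rule subspace_span)
  next
    fix x b assume "(x, b) \<in> span {(v, a)}"
    then show "b \<le> p x" using dom line by auto
  qed
  moreover have "(v, a) \<in> span {(v, a)}" by (rule span_base) simp
  ultimately show ?thesis using hahn_banach[OF p] by blast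
qed

lemma sublinear_norm: "sublinear norm"
  unfolding sublinear_def by (simp add: norm_triangle_ineq)

lemma infdist_add_subspace_le:
  fixes S :: "'a::real_normed_vector set"
  assumes S: "subspace S"
  shows "infdist (x + y) S \<le> infdist x S + infdist y S"
proof -
  have ne: "S \<noteq> {}" using subspace_0[OF S] by blast
  have "infdist (x + y) S - dist y t \<le> dist x s" if "s \<in> S" "t \<in> S" for s t
  proof -
    have "infdist (x + y) S \<le> dist (x + y) (s + t)" using subspace_add[OF S that] by (rule infdist_le)
    also have "\<dots> \<le> dist x s + dist y t" by (rule dist_triangle_add)
    finally show ?thesis by simp
  qed
  then have "infdist (x + y) S - dist y t \<le> infdist x S" if "t \<in> S" for t
    using that unfolding infdist_notempty[OF ne] by (intro cINF_greatest[OF ne]) auto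
  then have "infdist (x + y) S - infdist x S \<le> dist y t" if "t \<in> S" for t
    using that by force
  then have "infdist (x + y) S - infdist x S \<le> infdist y S"
    unfolding infdist_notempty[OF ne] by (intro cINF_greatest[OF ne]) auto
  then show ?thesis by simp
qed

lemma infdist_scaleR_subspace_le:
  fixes S :: "'a::real_normed_vector set"
  assumes S: "subspace S" and c: "c > 0"
  shows "infdist (c *\<^sub>R x) S \<le> c * infdist x S"
proof -
  have ne: "S \<noteq> {}" using subspace_0[OF S] by blast
  have "infdist (c *\<^sub>R x) S / c \<le> dist x s" if "s \<in> S" for s
  proof -
    have "infdist (c *\<^sub>R x) S \<le> dist (c *\<^sub>R x) (c *\<^sub>R s)" using subspace_scale[OF S that] by (rule infdist_le)
    also have "\<dots> = c * dist x s" using c by (simp add: dist_norm scaleR_diff_right[symmetric])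
    finally show ?thesis using c by (simp add: divide_le_eq mult.commute)
  qed
  then have "infdist (c *\<^sub>R x) S / c \<le> infdist x S"
    unfolding infdist_notempty[OF ne] by (intro cINF_greatest[OF ne]) (auto simp: infdist_notempty[OF ne])
  then show ?thesis using c by (simp add: divide_le_eq mult.commute)
qed

lemma sublinear_infdist_subspace:
  fixes S :: "'a::real_normed_vector set"
  assumes S: "subspace S"
  shows "sublinear (\<lambda>x. infdist x S)"
  unfolding sublinear_def
proof (intro conjI allI impI)
  fix c :: real and x :: 'a assume "c \<ge> 0"
  show "infdist (c *\<^sub>R x) S = c * infdist x S"
  proof (cases "c = 0")
    case True
    then show ?thesis using subspace_0[OF S] by simp
  next
    case False
    with \<open>c \<ge> 0\<close> have c: "c > 0" by simp
    have "infdist x S = infdist (inverse c *\<^sub>R (c *\<^sub>R x)) S" using c by simp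
    also have "\<dots> \<le> inverse c * infdist (c *\<^sub>R x) S" using c by (intro infdist_scaleR_subspace_le[OF S]) auto
    finally have "c * infdist x S \<le> infdist (c *\<^sub>R x) S" using c by (simp add: field_simps)
    with infdist_scaleR_subspace_le[OF S c, of x] show ?thesis by simp
  qed
qed (rule infdist_add_subspace_le[OF S])

lemma linear_abs_le_if_upper_bound:
  fixes g :: "'a::real_normed_vector \<Rightarrow> real"
  assumes g: "linear g" and K: "\<And>x. g x \<le> K * norm x"
  shows "\<bar>g x\<bar> \<le> K * norm x"
  using K[of x] K[of "- x"] linear_neg[OF g, of x] by simp

lemma bounded_linear_if_upper_bound:
  fixes g :: "'a::real_normed_vector \<Rightarrow> real"
  assumes g: "linear g" and K: "\<And>x. g x \<le> K * norm x"
  shows "bounded_linear g"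
  using linear_abs_le_if_upper_bound[OF assms] linear_add[OF g] linear_scale[OF g]
  by (intro bounded_linear_intro[where K = K]) (auto simp: mult.commute)

lemma norming_functional_exists:
  fixes d :: "'a::real_normed_vector"
  shows "\<exists>f :: 'a \<Rightarrow>\<^sub>L real. norm f \<le> 1 \<and> blinfun_apply f d = norm d"
proof -
  have "t * norm d \<le> norm (t *\<^sub>R d)" for t by (simp add: mult_right_mono)
  then obtain g where g: "linear g" "g d = norm d" "\<And>x. g x \<le> 1 * norm x"
    using hahn_banach_line[OF sublinear_norm] by fastforce
  have g_apply: "blinfun_apply (Blinfun g) = g"
    by (rule bounded_linear_Blinfun_apply[OF bounded_linear_if_upper_bound[OF g(1,3)]])
  have "norm (Blinfun g) \<le> 1"
    by (rule norm_blinfun_bound) (use linear_abs_le_if_upper_bound[OF g(1,3)] g_apply in auto)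
  with g(2) g_apply show ?thesis by auto
qed

lemma subspace_separating_functional:
  fixes S :: "'a::real_normed_vector set"
  assumes S: "subspace S" and g: "g \<notin> closure S"
  shows "\<exists>\<Phi> :: 'a \<Rightarrow> real. bounded_linear \<Phi> \<and> (\<forall>s\<in>S. \<Phi> s = 0) \<and> \<Phi> g \<noteq> 0"
proof -
  have p: "sublinear (\<lambda>x. infdist x S)" by (rule sublinear_infdist_subspace[OF S])
  define \<delta> where "\<delta> = infdist g S"
  have \<delta>: "\<delta> > 0"
    using g in_closure_iff_infdist_zero[of S g] infdist_nonneg[of g S] subspace_0[OF S]
    unfolding \<delta>_def by fastforce
  have "t * \<delta> \<le> infdist (t *\<^sub>R g) S" for t
  proof (cases "t \<ge> 0")
    case True
    then show ?thesis using sublinear_scaleR[OF p True, of g] by (simp add: \<delta>_def)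
  next
    case False
    then have "t * \<delta> \<le> 0" using \<delta> by (simp add: mult_nonpos_nonneg)
    then show ?thesis using infdist_nonneg order_trans by blast
  qed
  then obtain \<Phi> where \<Phi>: "linear \<Phi>" "\<Phi> g = \<delta>" "\<And>x. \<Phi> x \<le> infdist x S"
    using hahn_banach_line[OF p] by blast
  have "\<Phi> x \<le> 1 * norm x" for x
    using \<Phi>(3)[of x] infdist_le[OF subspace_0[OF S], of x] by simp
  then have "bounded_linear \<Phi>" by (rule bounded_linear_if_upper_bound[OF \<Phi>(1)])
  moreover have "\<Phi> s = 0" if "s \<in> S" for s
    using \<Phi>(3)[of s] \<Phi>(3)[of "- s"] subspace_neg[OF S that] that linear_neg[OF \<Phi>(1), of s] by simp
  moreover have "\<Phi> g \<noteq> 0" using \<Phi>(2) \<delta> by simp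
  ultimately show ?thesis by blast
qed

section \<open>Weak sequential compactness\<close>

lemma reflexive_spaceD:
  fixes \<Phi> :: "('a::real_normed_vector \<Rightarrow>\<^sub>L real) \<Rightarrow> real"
  assumes "reflexive_space TYPE('a)" and "bounded_linear \<Phi>"
  shows "\<exists>x. \<forall>f. \<Phi> f = blinfun_apply f x"
proof -
  obtain x where "\<And>f. blinfun_apply (Blinfun \<Phi>) f = blinfun_apply f x"
    using assms(1) unfolding reflexive_space_def by blast
  then show ?thesis using bounded_linear_Blinfun_apply[OF assms(2)] by auto
qed

lemma norming_functionals_separate_points:
  fixes d :: "'i \<Rightarrow> 'a::real_normed_vector" and f :: "'i \<Rightarrow> 'a \<Rightarrow>\<^sub>L real"
  assumes dense: "closure (range d) = UNIV"
    and f: "\<And>i. norm (f i) \<le> 1" "\<And>i. blinfun_apply (f i) (d i) = norm (d i)"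
    and x: "\<And>i. blinfun_apply (f i) x = 0"
  shows "x = 0"
proof -
  have "norm x \<le> 0 + e" if "e > 0" for e
  proof -
    have "x \<in> closure (range d)" using dense by simp
    then obtain y where "y \<in> range d" "dist y x < e / 2"
      using \<open>e > 0\<close> unfolding closure_approachable by (meson half_gt_zero)
    then obtain i where i: "dist (d i) x < e / 2" by blast
    have "norm (d i) = blinfun_apply (f i) (d i - x)" using f(2)[of i] x[of i] by (simp add: blinfun.diff_right)
    also have "\<dots> \<le> norm (f i) * norm (d i - x)" using norm_blinfun[of "f i" "d i - x"] by (simp add: abs_le_iff)
    also have "\<dots> \<le> norm (d i - x)" using f(1)[of i] by (simp add: mult_left_le_one_le)
    finally have "norm (d i) < e / 2" using i by (simp add: dist_norm)
    moreover have "norm x \<le> norm (d i) + norm (d i - x)" using norm_triangle_sub[of x "d i"]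
      by (simp add: norm_minus_commute)
    ultimately show ?thesis using i by (simp add: dist_norm)
  qed
  then show ?thesis using field_le_epsilon[of "norm x" 0] by simp
qed

lemma reflexive_norming_functionals_span_dense:
  fixes d :: "'i \<Rightarrow> 'a::real_normed_vector" and f :: "'i \<Rightarrow> 'a \<Rightarrow>\<^sub>L real"
  assumes refl: "reflexive_space TYPE('a)" and dense: "closure (range d) = UNIV"
    and f: "\<And>i. norm (f i) \<le> 1" "\<And>i. blinfun_apply (f i) (d i) = norm (d i)"
  shows "closure (span (range f)) = UNIV"
proof (rule ccontr)
  assume "closure (span (range f)) \<noteq> UNIV"
  then obtain g where "g \<notin> closure (span (range f))" by blast
  then obtain \<Phi> :: "('a \<Rightarrow>\<^sub>L real) \<Rightarrow> real"
    where \<Phi>: "bounded_linear \<Phi>" "\<And>h. h \<in> span (range f) \<Longrightarrow> \<Phi> h = 0" "\<Phi> g \<noteq> 0"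
    using subspace_separating_functional[OF subspace_span] by blast
  \<comment> \<open>by reflexivity \<open>\<Phi>\<close> is evaluation at a point, which all \<open>f i\<close> annihilate\<close>
  obtain x where x: "\<And>h. \<Phi> h = blinfun_apply h x" using reflexive_spaceD[OF refl \<Phi>(1)] by blast
  have "blinfun_apply (f i) x = 0" for i using \<Phi>(2)[of "f i"] x by (simp add: span_base)
  then have "x = 0" by (rule norming_functionals_separate_points[OF dense f])
  then show False using \<Phi>(3) x by simp
qed

lemma bounded_sequences_diagonal_convergent:
  fixes a :: "nat \<Rightarrow> nat \<Rightarrow> real"
  assumes bounded: "\<And>k. Bseq (a k)"
  shows "\<exists>r. strict_mono r \<and> (\<forall>k. convergent (a k \<circ> r))"
proof -
  define P where "P k s \<longleftrightarrow> convergent (a k \<circ> s)" for k and s :: "nat \<Rightarrow> nat"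
  interpret subseqs P
  proof
    fix k and s :: "nat \<Rightarrow> nat"
    obtain f where f: "strict_mono f" "monoseq (a k \<circ> s \<circ> f)"
      using seq_monosub[of "a k \<circ> s"] by (auto simp: o_def)
    have "Bseq (a k \<circ> s \<circ> f)" using Bseq_subseq[OF bounded[of k]] by (simp add: o_def)
    with f show "\<exists>r'. strict_mono r' \<and> P k (s \<circ> r')"
      unfolding P_def by (metis Bseq_monoseq_convergent comp_assoc)
  qed
  have "P k (diagseq \<circ> (+) (Suc k))" for k
  proof (rule diagseq_holds)
    fix r s :: "nat \<Rightarrow> nat" and n assume "strict_mono r" "P n s"
    then show "P n (s \<circ> r)" unfolding P_def by (metis comp_assoc convergent_subseq_convergent)
  qed
  then have "convergent (\<lambda>n. a k (diagseq (Suc k + n)))" for k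
    unfolding P_def o_def .
  moreover have "(\<lambda>n. (a k \<circ> diagseq) (n + Suc k)) = (\<lambda>n. a k (diagseq (Suc k + n)))" for k
    by (rule ext) (simp add: add.commute)
  ultimately have "convergent (a k \<circ> diagseq)" for k
    using convergent_ignore_initial_segment[of "a k \<circ> diagseq" "Suc k"] by simp
  then show ?thesis using subseq_diagseq by blast
qed

lemma norm_blinfun_apply_le:
  assumes "norm x \<le> C"
  shows "norm (blinfun_apply f x) \<le> norm f * C"
  using norm_blinfun[of f x] assms by (meson mult_left_mono norm_ge_zero order_trans)

lemma subspace_convergent_functionals:
  "subspace {f :: 'a::real_normed_vector \<Rightarrow>\<^sub>L real. convergent (\<lambda>n. blinfun_apply f (xs n))}"
  unfolding subspace_def
  by (auto simp: plus_blinfun.rep_eq scaleR_blinfun.rep_eq convergent_const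
      intro: convergent_add convergent_mult convergent_const)

lemma closed_convergent_functionals:
  fixes xs :: "nat \<Rightarrow> 'a::real_normed_vector"
  assumes bound: "\<And>n. norm (xs n) \<le> C"
  shows "closed {f :: 'a \<Rightarrow>\<^sub>L real. convergent (\<lambda>n. blinfun_apply f (xs n))}"
    (is "closed ?Q")
proof -
  have C: "C \<ge> 0" using bound[of 0] norm_ge_zero order_trans by blast
  have "g \<in> ?Q" if g: "g \<in> closure ?Q" for g
  proof -
    have "Cauchy (\<lambda>n. blinfun_apply g (xs n))"
    proof (rule CauchyI)
      fix e :: real assume e: "e > 0"
      have "e / (3 * (C + 1)) > 0" using e C by simp
      then obtain h where h: "h \<in> ?Q" "dist h g < e / (3 * (C + 1))"
        using g unfolding closure_approachable by blast
      have close: "\<bar>blinfun_apply g (xs n) - blinfun_apply h (xs n)\<bar> \<le> e / 3" for n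
      proof -
        have "\<bar>blinfun_apply (g - h) (xs n)\<bar> \<le> norm (g - h) * C"
          using norm_blinfun_apply_le[OF bound, of "g - h" n] by simp
        also have "\<dots> \<le> e / (3 * (C + 1)) * C"
          using h(2) C by (intro mult_right_mono) (auto simp: dist_norm norm_minus_commute)
        also have "\<dots> \<le> e / 3" using e C by (simp add: field_simps)
        finally show ?thesis by (simp add: blinfun.diff_left)
      qed
      have "Cauchy (\<lambda>n. blinfun_apply h (xs n))" using h(1) by (simp add: convergent_Cauchy)
      then obtain N where N: "\<And>m n. m \<ge> N \<Longrightarrow> n \<ge> N \<Longrightarrow>
          \<bar>blinfun_apply h (xs m) - blinfun_apply h (xs n)\<bar> < e / 3"
        using e unfolding Cauchy_def dist_real_def by (meson divide_pos_pos zero_less_numeral)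
      have "norm (blinfun_apply g (xs m) - blinfun_apply g (xs n)) < e" if "m \<ge> N" "n \<ge> N" for m n
        using close[of m] close[of n] N[OF that] by (simp only: real_norm_def)
      then show "\<exists>N. \<forall>m\<ge>N. \<forall>n\<ge>N. norm (blinfun_apply g (xs m) - blinfun_apply g (xs n)) < e"
        by blast
    qed
    then show ?thesis by (simp add: Cauchy_convergent_iff)
  qed
  then show ?thesis using closure_subset_eq by blast
qed

lemma weak_conv_if_functionals_convergent:
  fixes xs :: "nat \<Rightarrow> 'a::real_normed_vector"
  assumes refl: "reflexive_space TYPE('a)" and bound: "\<And>n. norm (xs n) \<le> C"
    and conv: "\<And>f :: 'a \<Rightarrow>\<^sub>L real. convergent (\<lambda>n. blinfun_apply f (xs n))"
  shows "\<exists>u. weak_conv xs u"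
proof -
  define L where "L f = lim (\<lambda>n. blinfun_apply f (xs n))" for f :: "'a \<Rightarrow>\<^sub>L real"
  have L: "(\<lambda>n. blinfun_apply f (xs n)) \<longlonglongrightarrow> L f" for f
    using conv[of f] unfolding L_def by (simp add: convergent_LIMSEQ_iff)
  have "bounded_linear L"
  proof (rule bounded_linear_intro[where K = C])
    fix f g :: "'a \<Rightarrow>\<^sub>L real"
    show "L (f + g) = L f + L g"
      using L[of "f + g"] tendsto_add[OF L[of f] L[of g]] by (simp add: plus_blinfun.rep_eq LIMSEQ_unique)
  next
    fix c f show "L (c *\<^sub>R f) = c *\<^sub>R L f"
      using L[of "c *\<^sub>R f"] tendsto_mult[OF tendsto_const[of c] L[of f]]
      by (simp add: scaleR_blinfun.rep_eq LIMSEQ_unique)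
  next
    fix f :: "'a \<Rightarrow>\<^sub>L real"
    have "norm (blinfun_apply f (xs n)) \<le> norm f * C" for n
      using norm_blinfun_apply_le[OF bound] .
    then show "norm (L f) \<le> norm f * C" by (intro LIMSEQ_le_const2[OF tendsto_norm[OF L]]) auto
  qed
  then obtain u where u: "\<And>f. L f = blinfun_apply f u" using reflexive_spaceD[OF refl] by blast
  have "weak_conv xs u"
    unfolding weak_conv_def
  proof (intro allI impI)
    fix f :: "'a \<Rightarrow> real" assume "bounded_linear f"
    then show "(\<lambda>n. f (xs n)) \<longlonglongrightarrow> f u"
      using L[of "Blinfun f"] u[of "Blinfun f"] by (simp add: bounded_linear_Blinfun_apply)
  qed
  then show ?thesis ..
qed

theorem reflexive_separable_weakly_sequentially_compact:
  fixes xs :: "nat \<Rightarrow> 'a::real_normed_vector"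
  assumes refl: "reflexive_space TYPE('a)" and sep: "separable_space TYPE('a)"
    and bound: "\<And>n. norm (xs n) \<le> C"
  shows "\<exists>r u. strict_mono r \<and> weak_conv (xs \<circ> r) u"
proof -
  obtain D :: "'a set" where D: "countable D" "closure D = UNIV"
    using sep unfolding separable_space_def by blast
  then have "D \<noteq> {}" by auto
  define d where "d = from_nat_into D"
  have dense: "closure (range d) = UNIV" using D range_from_nat_into[OF \<open>D \<noteq> {}\<close>] by (simp add: d_def)
  have "\<forall>k. \<exists>g :: 'a \<Rightarrow>\<^sub>L real. norm g \<le> 1 \<and> blinfun_apply g (d k) = norm (d k)"
    using norming_functional_exists by blast
  then obtain f where f: "\<And>k. norm (f k) \<le> 1" "\<And>k. blinfun_apply (f k) (d k) = norm (d k)"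
    by metis
  have "Bseq (\<lambda>n. blinfun_apply (f k) (xs n))" for k
    using norm_blinfun_apply_le[OF bound] by (intro BseqI')
  then obtain r where r: "strict_mono r" "\<And>k. convergent (\<lambda>n. blinfun_apply (f k) (xs (r n)))"
    using bounded_sequences_diagonal_convergent[of "\<lambda>k n. blinfun_apply (f k) (xs n)"]
    by (auto simp: o_def)
  define Q where "Q = {g :: 'a \<Rightarrow>\<^sub>L real. convergent (\<lambda>n. blinfun_apply g (xs (r n)))}"
  have "span (range f) \<subseteq> Q"
    using r(2) subspace_convergent_functionals unfolding Q_def by (intro span_minimal) auto
  then have "closure (span (range f)) \<subseteq> Q"
    using closed_convergent_functionals[of "xs \<circ> r"] bound unfolding Q_def
    by (intro closure_minimal) auto
  then have "convergent (\<lambda>n. blinfun_apply g (xs (r n)))" for g :: "'a \<Rightarrow>\<^sub>L real"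
    using reflexive_norming_functionals_span_dense[OF refl dense f] unfolding Q_def by auto
  then obtain u where "weak_conv (xs \<circ> r) u"
    using weak_conv_if_functionals_convergent[OF refl, of "xs \<circ> r" C] bound by auto
  with r(1) show ?thesis by blast
qed

section \<open>The discrete dual norm\<close>

lemma weak_conv_diff_left:
  assumes "weak_conv xs x"
  shows "weak_conv (\<lambda>n. c - xs n) (c - x)"
  unfolding weak_conv_def
proof (intro allI impI)
  fix f :: "'a \<Rightarrow> real" assume f: "bounded_linear f"
  then have "(\<lambda>n. f c - f (xs n)) \<longlonglongrightarrow> f c - f x"
    using assms unfolding weak_conv_def by (intro tendsto_diff tendsto_const) blast
  then show "(\<lambda>n. f (c - xs n)) \<longlonglongrightarrow> f (c - x)" by (simp add: linear_diff[OF bounded_linear.linear[OF f]])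
qed

locale bounded_bilinear_form =
  fixes A :: "'w::real_normed_vector \<Rightarrow> 'v::real_normed_vector \<Rightarrow> real"
    and M :: real and V :: "'v set"
  assumes linear_left: "\<And>v. linear (\<lambda>w. A w v)"
    and linear_right: "\<And>w. linear (A w)"
    and bounded: "\<And>w v. A w v \<le> M * norm w * norm v"
    and V_nonzero: "\<exists>v\<in>V. norm v \<noteq> 0"
begin

lemma abs_bounded: "\<bar>A w v\<bar> \<le> M * norm w * norm v"
  using bounded[of w v] bounded[of w "- v"] linear_neg[OF linear_right, of w v] by simp

lemma bounded_linear_left: "bounded_linear (\<lambda>w. A w v)"
  using abs_bounded linear_add[OF linear_left] linear_scale[OF linear_left]
  by (intro bounded_linear_intro[where K = "M * norm v"]) (auto simp: ac_simps)

lemma op_norm_ge: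
  assumes "v \<in> V" "v \<noteq> 0"
  shows "A w v / norm v \<le> op_norm A V w"
proof -
  have "A w v' / norm v' \<le> M * norm w" if "v' \<noteq> 0" for v'
    using abs_bounded[of w v'] that by (simp add: divide_le_eq abs_le_iff)
  then have "bdd_above ((\<lambda>v. A w v / norm v) ` {v \<in> V. norm v \<noteq> 0})" by (intro bdd_aboveI2) auto
  then show ?thesis unfolding op_norm_def using assms by (intro cSUP_upper2) auto
qed

lemma op_norm_le:
  assumes "\<And>v. v \<in> V \<Longrightarrow> v \<noteq> 0 \<Longrightarrow> A w v / norm v \<le> c"
  shows "op_norm A V w \<le> c"
  unfolding op_norm_def using V_nonzero assms by (intro cSUP_least) auto

lemma op_norm_add_le: "op_norm A V (x + y) \<le> op_norm A V x + op_norm A V y"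
proof (rule op_norm_le)
  fix v assume "v \<in> V" "v \<noteq> 0"
  then have "A x v / norm v + A y v / norm v \<le> op_norm A V x + op_norm A V y"
    by (intro add_mono op_norm_ge)
  then show "A (x + y) v / norm v \<le> op_norm A V x + op_norm A V y"
    by (simp add: linear_add[OF linear_left] add_divide_distrib)
qed

text \<open>Each quotient \<open>A w v / \<parallel>v\<parallel>\<close> is weakly continuous in \<open>w\<close>, so their supremum is weakly
  lower semicontinuous.\<close>
lemma op_norm_weak_lsc:
  assumes "weak_conv xs x" and "(\<lambda>n. ereal (op_norm A V (xs n))) \<longlonglongrightarrow> L"
  shows "ereal (op_norm A V x) \<le> L"
proof -
  have *: "ereal (A x v / norm v) \<le> L" if "v \<in> V" "v \<noteq> 0" for v
  proof (rule LIMSEQ_le[OF _ assms(2)])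
    have "(\<lambda>n. A (xs n) v) \<longlonglongrightarrow> A x v"
      using assms(1) bounded_linear_left unfolding weak_conv_def by blast
    then have "(\<lambda>n. A (xs n) v / norm v) \<longlonglongrightarrow> A x v / norm v"
      using \<open>v \<noteq> 0\<close> by (intro tendsto_divide tendsto_const) auto
    then show "(\<lambda>n. ereal (A (xs n) v / norm v)) \<longlonglongrightarrow> ereal (A x v / norm v)"
      by (rule tendsto_ereal)
    show "\<exists>N. \<forall>n\<ge>N. ereal (A (xs n) v / norm v) \<le> ereal (op_norm A V (xs n))"
      using op_norm_ge[OF that] by simp
  qed
  show ?thesis
  proof (cases L)
    case (real l)
    then show ?thesis using * by (auto intro: op_norm_le)
  next
    case PInf
    then show ?thesis by simp
  next
    case MInf
    then show ?thesis using * V_nonzero by auto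
  qed
qed

lemma bounded_if_infsup_diff:
  assumes \<kappa>: "\<kappa> > 0" "\<And>w. w \<in> diff_set W \<Longrightarrow> \<kappa> * norm w \<le> op_norm A V w"
    and ws: "\<And>n. ws n \<in> W" and residual: "\<And>n. op_norm A V (u - ws n) \<le> B"
  shows "norm (ws n) \<le> norm (ws 0) + (B + op_norm A V (ws 0 - u)) / \<kappa>"
proof -
  have "ws 0 - ws n \<in> diff_set W" unfolding diff_set_def using ws by blast
  then have "\<kappa> * norm (ws 0 - ws n) \<le> op_norm A V ((u - ws n) + (ws 0 - u))" using \<kappa>(2) by simp
  also have "\<dots> \<le> B + op_norm A V (ws 0 - u)" using op_norm_add_le residual[of n] by (meson add_right_mono order_trans)
  finally have "norm (ws 0 - ws n) \<le> (B + op_norm A V (ws 0 - u)) / \<kappa>"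
    using \<kappa>(1) by (simp add: le_divide_eq mult.commute)
  then show ?thesis using norm_triangle_sub[of "ws n" "ws 0"] by (simp add: norm_minus_commute)
qed

lemma minimizing_sequence_tail_bounded:
  assumes \<kappa>: "\<kappa> > 0" "\<And>w. w \<in> diff_set W \<Longrightarrow> \<kappa> * norm w \<le> op_norm A V w"
    and ws: "\<And>n. ws n \<in> W"
    and minimizing: "(\<lambda>n. ereal (op_norm A V (u - ws n))) \<longlonglongrightarrow> (INF w\<in>W. ereal (op_norm A V (u - w)))"
  shows "\<exists>N K. \<forall>n. norm (ws (n + N)) \<le> K"
proof -
  have "(INF w\<in>W. ereal (op_norm A V (u - w))) \<le> ereal (op_norm A V (u - ws 0))"
    using ws by (rule INF_lower)
  then have "(INF w\<in>W. ereal (op_norm A V (u - w))) < ereal (op_norm A V (u - ws 0) + 1)"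
    by (simp add: le_less_trans)
  from order_tendstoD(2)[OF minimizing this]
  obtain N where "\<And>n. n \<ge> N \<Longrightarrow> op_norm A V (u - ws n) < op_norm A V (u - ws 0) + 1"
    unfolding eventually_sequentially by auto
  then have "op_norm A V (u - ws (n + N)) \<le> op_norm A V (u - ws 0) + 1" for n
    by (simp add: less_imp_le)
  then show ?thesis using bounded_if_infsup_diff[OF \<kappa>, where ws = "\<lambda>n. ws (n + N)"] ws by blast
qed

lemma weak_limit_of_minimizing_sequence_le:
  assumes minimizing: "(\<lambda>n. ereal (op_norm A V (u - ws n))) \<longlonglongrightarrow> (INF w\<in>W. ereal (op_norm A V (u - w)))"
    and r: "strict_mono r" and conv: "weak_conv (ws \<circ> r) u\<^sub>s" and w: "w \<in> W"
  shows "op_norm A V (u - u\<^sub>s) \<le> op_norm A V (u - w)"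
proof -
  have "ereal (op_norm A V (u - u\<^sub>s)) \<le> (INF w\<in>W. ereal (op_norm A V (u - w)))"
    using op_norm_weak_lsc[OF weak_conv_diff_left[OF conv]] LIMSEQ_subseq_LIMSEQ[OF minimizing r]
    by (simp add: o_def)
  also have "\<dots> \<le> ereal (op_norm A V (u - w))" using w by (rule INF_lower)
  finally show ?thesis by simp
qed

end

theorem mainTheorem4:
  fixes A :: "'w::banach \<Rightarrow> 'v::banach \<Rightarrow> real"
    and F :: "'v \<Rightarrow> real"
    and u :: 'w and M :: real
    and W\<theta> :: "'w set" and V\<eta> :: "'v set"
    and ws :: "nat \<Rightarrow> 'w"
  assumes reflW: "reflexive_space TYPE('w)" and sepW: "separable_space TYPE('w)"
    and reflV: "reflexive_space TYPE('v)" and sepV: "separable_space TYPE('v)"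
    and linA1: "\<And>v. linear (\<lambda>w. A w v)"
    and linA2: "\<And>w. linear (A w)"
    and bndA: "\<And>w v. A w v \<le> M * norm w * norm v"
    and F: "bounded_linear F"
    and sol: "\<And>v. A u v = F v"
    and uniq: "\<And>w. (\<forall>v. A w v = F v) \<Longrightarrow> w = u"
    and V\<eta>_ne: "\<exists>v\<in>V\<eta>. norm v \<noteq> 0"
    and infsup: "\<exists>\<kappa>>0. \<forall>w \<in> W\<theta> \<union> diff_set W\<theta>. \<kappa> * norm w \<le> op_norm A V\<eta> w"
    and ws_in: "\<And>n. ws n \<in> W\<theta>"
    and minimizing: "(\<lambda>n. ereal (op_norm A V\<eta> (u - ws n)))
                       \<longlonglongrightarrow> (INF w\<in>W\<theta>. ereal (op_norm A V\<eta> (u - w)))"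
  shows "(\<exists>r u\<^sub>s. strict_mono r \<and> weak_conv (ws \<circ> r) u\<^sub>s \<and> u\<^sub>s \<in> seq_weak_closure W\<theta>)
       \<and> (\<forall>r u\<^sub>s. strict_mono r \<and> weak_conv (ws \<circ> r) u\<^sub>s \<longrightarrow>
              (\<forall>w\<in>W\<theta>. op_norm A V\<eta> (u - u\<^sub>s) \<le> op_norm A V\<eta> (u - w)))"
proof -
  interpret bounded_bilinear_form A M V\<eta>
    using linA1 linA2 bndA V\<eta>_ne by (simp add: bounded_bilinear_form_def)
  obtain \<kappa> where \<kappa>: "\<kappa> > 0" "\<And>w. w \<in> diff_set W\<theta> \<Longrightarrow> \<kappa> * norm w \<le> op_norm A V\<eta> w"
    using infsup by blast
  obtain N K where "\<And>n. norm (ws (n + N)) \<le> K"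
    using minimizing_sequence_tail_bounded[OF \<kappa> ws_in minimizing] by blast
  then obtain r u\<^sub>s where r: "strict_mono r" and conv: "weak_conv ((\<lambda>n. ws (n + N)) \<circ> r) u\<^sub>s"
    using reflexive_separable_weakly_sequentially_compact[OF reflW sepW, of "\<lambda>n. ws (n + N)"] by blast
  define s where "s n = r n + N" for n
  have "strict_mono s" using r by (simp add: strict_mono_def s_def)
  moreover have s_conv: "weak_conv (ws \<circ> s) u\<^sub>s" using conv by (simp add: o_def s_def)
  moreover have "u\<^sub>s \<in> seq_weak_closure W\<theta>"
    using ws_in s_conv unfolding seq_weak_closure_def by (auto intro!: exI[of _ "ws \<circ> s"])
  ultimately show ?thesis using weak_limit_of_minimizing_sequence_le[OF minimizing] by blast
qed

end
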